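(* Let $a_{1}<a_{2}<a_{3}<\cdots$ be a strictly increasing infinite sequence of positive integers, let $A=\{a_{1},a_{2},a_{3},\ldots\}$, and let $n>0$ be an integer such that: (1) whenever $m>n$, there exist indices $i<r\leq s<j$ with $a_{m}=a_{i}+a_{j}=a_{r}+a_{s}$; and (2) whenever $a=a_{i}+a_{j}=a_{r}+a_{s}>a_{n}$ for some indices $i<r<s<j$, then $a=a_{m}$ for some $m>n$. Suppose $d,a,b$ are integers such that the five numbers $d,a,b,a+d,b+d$ are pairwise distinct and all belong to $A$, and suppose $a_{n}<k$ where $k=a+b+d$. Then every positive multiple of $k$ belongs to $A$, i.e., $mk\in A$ for all integers $m\geq 1$. *)

theory Defs
  imports Main
begin

end

theory Submission
  imports Defs
begin

(* Call a set A closed above c if every sum p + q = r + s > c of two representations by four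
   distinct elements of A lies in A; condition (2) makes A closed above a_n.
   Put k = x + y + d. Then k = x + (y + d) = (x + d) + y and k + d = (x + d) + (y + d) lie in A.
   If t and t + d lie in A with t >= k, the identities
     (t + d) + x = t + (x + d),            (t + d) + y = t + (y + d),
     (t + d + x) + y = (t + d + y) + x,    (t + d + x) + (y + d) = (t + d + y) + (x + d)
   put t + k and t + k + d into A; positivity of A makes all these quadruples distinct. *)

definition double_sum_closed_above :: "'a::linordered_ab_group_add \<Rightarrow> 'a set \<Rightarrow> bool" where
  "double_sum_closed_above c A \<longleftrightarrow>
     (\<forall>p\<in>A. \<forall>q\<in>A. \<forall>r\<in>A. \<forall>s\<in>A.
        distinct [p, q, r, s] \<longrightarrow> p + q = r + s \<longrightarrow> c < p + q \<longrightarrow> p + q \<in> A)"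

lemma double_sum_closed_aboveD:
  assumes "double_sum_closed_above c A" "p \<in> A" "q \<in> A" "r \<in> A" "s \<in> A"
    and "distinct [p, q, r, s]" "p + q = r + s" "c < p + q"
  shows "p + q \<in> A"
  using assms unfolding double_sum_closed_above_def by blast

lemma double_sum_closed_aboveI:
  assumes nested: "\<And>p q r s. p \<in> A \<Longrightarrow> q \<in> A \<Longrightarrow> r \<in> A \<Longrightarrow> s \<in> A \<Longrightarrow>
      p < r \<Longrightarrow> r < s \<Longrightarrow> s < q \<Longrightarrow> p + q = r + s \<Longrightarrow> c < p + q \<Longrightarrow> p + q \<in> A"
  shows "double_sum_closed_above c A"
  unfolding double_sum_closed_above_def
proof (intro ballI impI)
  \<comment> \<open>Of two representations of the same sum, the pair containing the smallest summand
     also contains the largest one.\<close>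
  fix p q r s
  assume mem: "p \<in> A" "q \<in> A" "r \<in> A" "s \<in> A" and "distinct [p, q, r, s]"
    and sum: "p + q = r + s" and above: "c < p + q"
  have sum_minmax: "min p q + max p q = p + q" "min r s + max r s = r + s"
    by (simp_all add: min_def max_def)
  have minmax_mem: "min p q \<in> A" "max p q \<in> A" "min r s \<in> A" "max r s \<in> A"
    using mem by (simp_all add: min_def max_def)
  have "min p q \<noteq> min r s" and minmax_less: "min p q < max p q" "min r s < max r s"
    using \<open>distinct [p, q, r, s]\<close> by (auto simp: min_def max_def)
  moreover have "max r s < max p q" if "min p q < min r s"
    using add_less_le_mono[OF that, of "max p q" "max r s"] sum sum_minmax
    by (metis not_less order.irrefl)
  moreover have "max p q < max r s" if "min r s < min p q"
    using add_less_le_mono[OF that, of "max r s" "max p q"] sum sum_minmax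
    by (metis not_less order.irrefl)
  ultimately consider
      "min p q < min r s" "max r s < max p q" | "min r s < min p q" "max p q < max r s"
    by (meson linorder_neqE)
  then show "p + q \<in> A"
  proof cases
    case 1
    then show ?thesis
      using nested[OF minmax_mem(1,2,3,4)] sum sum_minmax above minmax_less(2) by simp
  next
    case 2
    then show ?thesis
      using nested[OF minmax_mem(3,4,1,2)] sum sum_minmax above minmax_less(1) by simp
  qed
qed

lemma double_sum_closed_above_seq_range:
  fixes a :: "nat \<Rightarrow> 'a::linordered_ab_group_add"
  assumes mono: "\<And>i. i \<ge> 1 \<Longrightarrow> a i < a (Suc i)"
    and nested: "\<And>i r s j. 1 \<le> i \<Longrightarrow> i < r \<Longrightarrow> r < s \<Longrightarrow> s < j \<Longrightarrow>
       a i + a j = a r + a s \<Longrightarrow> c < a i + a j \<Longrightarrow> \<exists>m\<ge>1. a i + a j = a m"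
  shows "double_sum_closed_above c {a i | i. i \<ge> 1}"
proof (rule double_sum_closed_aboveI)
  have less: "a i < a j" if "1 \<le> i" "i < j" for i j
    using lift_Suc_mono_less_ivl[of "{1..}" a i j] mono that by (simp add: subset_eq)
  have less_iff: "a i < a j \<longleftrightarrow> i < j" if "1 \<le> i" "1 \<le> j" for i j
    using less[of i j] less[of j i] that by (cases i j rule: linorder_cases) auto
  fix p q r s
  assume "p \<in> {a i | i. i \<ge> 1}" "q \<in> {a i | i. i \<ge> 1}"
    "r \<in> {a i | i. i \<ge> 1}" "s \<in> {a i | i. i \<ge> 1}"
  then obtain i j r' s' where idx: "1 \<le> i" "1 \<le> j" "1 \<le> r'" "1 \<le> s'"
    and vals: "p = a i" "q = a j" "r = a r'" "s = a s'"
    by blast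
  assume "p < r" "r < s" "s < q" "p + q = r + s" "c < p + q"
  then have "i < r'" "r' < s'" "s' < j"
    using less_iff idx vals by simp_all
  then show "p + q \<in> {a i | i. i \<ge> 1}"
    using nested[of i r' s' j] idx vals \<open>p + q = r + s\<close> \<open>c < p + q\<close> by auto
qed

context
  fixes A :: "int set" and c d x y k :: int
  assumes closed: "double_sum_closed_above c A"
    and pos: "A \<subseteq> {0<..}"
    and dist: "distinct [d, x, y, x + d, y + d]"
    and mem: "d \<in> A" "x \<in> A" "y \<in> A" "x + d \<in> A" "y + d \<in> A"
    and k_def: "k = x + y + d"
    and above: "c < k"
begin

private lemma generators_pos: "0 < d" "0 < x" "0 < y"
  using pos mem by auto

lemma double_sum_closed_above_base: "k \<in> A" "k + d \<in> A"
proof -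
  show "k \<in> A"
    using double_sum_closed_aboveD[OF closed mem(2,5,4,3)] dist above k_def
    by (auto simp: add.assoc)
  then show "k + d \<in> A"
    using double_sum_closed_aboveD[OF closed _ mem(1,4,5), of k] dist above generators_pos k_def
    by auto
qed

lemma double_sum_closed_above_step:
  assumes t: "t \<in> A" "t + d \<in> A" and "k \<le> t"
  shows "t + k \<in> A" "t + k + d \<in> A"
proof -
  note facts = t \<open>k \<le> t\<close> k_def above generators_pos
  have tx: "t + d + x \<in> A"
    using double_sum_closed_aboveD[OF closed t(2) mem(2) t(1) mem(4)] facts by simp
  have ty: "t + d + y \<in> A"
    using double_sum_closed_aboveD[OF closed t(2) mem(3) t(1) mem(5)] facts by simp
  have "t + d + x + y \<in> A"
    using double_sum_closed_aboveD[OF closed tx mem(3) ty mem(2)] facts dist by simp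
  then show "t + k \<in> A"
    using k_def by (simp add: add_ac)
  have "t + d + x + (y + d) \<in> A"
    using double_sum_closed_aboveD[OF closed tx mem(5) ty mem(4)] facts dist by simp
  then show "t + k + d \<in> A"
    using k_def by (simp add: add_ac)
qed

lemma double_sum_closed_above_multiples:
  assumes "1 \<le> m"
  shows "m * k \<in> A"
proof -
  have "m * k \<in> A \<and> m * k + d \<in> A"
    using assms
  proof (induction m rule: int_ge_induct)
    case base
    show ?case using double_sum_closed_above_base by simp
  next
    case (step m)
    have "k \<le> m * k"
      using step.hyps double_sum_closed_above_base(1) pos by auto
    then have "m * k + k \<in> A" "m * k + k + d \<in> A"
      using double_sum_closed_above_step step.IH by blast+
    then show ?case
      by (simp add: distrib_right)
  qed
  then show ?thesis ..
qed

end

theorem lemma1: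
  fixes a :: "nat \<Rightarrow> int" and A :: "int set" and n :: nat and d x y k :: int
  assumes mono: "\<And>i. i \<ge> 1 \<Longrightarrow> a i < a (Suc i)"
    and pos: "\<And>i. i \<ge> 1 \<Longrightarrow> a i > 0"
    and A_def: "A = {a i | i. i \<ge> 1}"
    and n_pos: "n > 0"
    and cond1: "\<And>m. m > n \<Longrightarrow>
       \<exists>i r s j. 1 \<le> i \<and> i < r \<and> r \<le> s \<and> s < j \<and> a m = a i + a j \<and> a m = a r + a s"
    and cond2: "\<And>i r s j. 1 \<le> i \<Longrightarrow> i < r \<Longrightarrow> r < s \<Longrightarrow> s < j \<Longrightarrow>
       a i + a j = a r + a s \<Longrightarrow> a i + a j > a n \<Longrightarrow> \<exists>m>n. a i + a j = a m"
    and dist: "distinct [d, x, y, x + d, y + d]"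
    and mem: "d \<in> A" "x \<in> A" "y \<in> A" "x + d \<in> A" "y + d \<in> A"
    and k_def: "k = x + y + d"
    and nk: "a n < k"
  shows "\<forall>m::int. m \<ge> 1 \<longrightarrow> m * k \<in> A"
proof -
  have closed: "double_sum_closed_above (a n) A"
    unfolding A_def using mono
  proof (rule double_sum_closed_above_seq_range)
    fix i r s j
    assume "1 \<le> i" "i < r" "r < s" "s < j" "a i + a j = a r + a s" "a n < a i + a j"
    then obtain m where "n < m" "a i + a j = a m"
      using cond2 by blast
    then show "\<exists>m\<ge>1. a i + a j = a m"
      by (intro exI[of _ m]) simp
  qed
  have "A \<subseteq> {0<..}"
    using pos unfolding A_def by auto
  then show ?thesis
    using double_sum_closed_above_multiples[OF closed _ dist mem k_def nk] by blast
qed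

end
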